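(* Let $A\in\mathbb{C}^{N\times N}$ have separation index $I_s(A)=1$. Then the real Lie algebra generated by $A-A^\dagger$, $iA+iA^\dagger$ and $i[A,A^\dagger]$ is isomorphic to $\mathfrak{su}(2)$.
   Context: $\mathfrak{u}(N)$ is the real Lie algebra of skew-Hermitian $N\times N$ matrices. For $\Omega\in\mathfrak{u}(N)$ and $\varphi\in\mathbb{R}$, let $E_\varphi(\Omega)=\{X\in\mathbb{C}^{N\times N}\mid \Omega X-X\Omega=i\varphi X\}$ (a complex subspace). The separation index of $A$ is $I_s(A)=\min\{\dim_{\mathbb{C}}E_\varphi(\Omega)\mid A\in E_\varphi(\Omega),\ \Omega\in\mathfrak{u}(N),\ \varphi\in\mathbb{R},\ \varphi\neq 0\}$ (and $I_s(A)=-\infty$ if there is no such pair). $[X,Y]=XY-YX$. *)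

theory Defs
  imports "HOL-Analysis.Analysis"
begin

text \<open>N x N complex matrices are rendered as complex^'n^'n with 'n a finite index type (N = CARD('n)).\<close>

definition adj :: "complex^'n^'m \<Rightarrow> complex^'m^'n" where
  "adj A = (\<chi> i j. cnj (A $ j $ i))"

definition mcomm :: "complex^'n^'n \<Rightarrow> complex^'n^'n \<Rightarrow> complex^'n^'n" where
  "mcomm X Y = X ** Y - Y ** X"

definition cscale :: "complex \<Rightarrow> complex^'n^'m \<Rightarrow> complex^'n^'m" where
  "cscale c X = (\<chi> i j. c * X $ i $ j)"

definition cdim :: "(complex^'n^'m) set \<Rightarrow> nat" where
  "cdim S = vector_space.dim cscale S"

definition u_alg :: "(complex^'n^'n) set" where
  "u_alg = {X. adj X = - X}"

definition Eig :: "real \<Rightarrow> complex^'n^'n \<Rightarrow> (complex^'n^'n) set" where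
  "Eig \<phi> \<Omega> = {X. \<Omega> ** X - X ** \<Omega> = cscale (\<i> * complex_of_real \<phi>) X}"

definition sep_index :: "complex^'n^'n \<Rightarrow> ereal" where
  "sep_index A =
     (let S = {cdim (Eig \<phi> \<Omega>) | \<phi> \<Omega>. A \<in> Eig \<phi> \<Omega> \<and> \<Omega> \<in> u_alg \<and> \<phi> \<noteq> 0}
      in if S = {} then -\<infinity> else ereal (real (Inf S)))"

definition lie_generated :: "(complex^'n^'n) set \<Rightarrow> (complex^'n^'n) set" where
  "lie_generated S = \<Inter>{L. subspace L \<and> S \<subseteq> L \<and> (\<forall>x\<in>L. \<forall>y\<in>L. mcomm x y \<in> L)}"

definition su2 :: "(complex^2^2) set" where
  "su2 = {X. adj X = - X \<and> trace X = 0}"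

definition lie_iso :: "(complex^'n^'n) set \<Rightarrow> (complex^'k^'k) set \<Rightarrow> bool" where
  "lie_iso L M = (\<exists>f. bij_betw f L M \<and>
      (\<forall>x\<in>L. \<forall>y\<in>L. \<forall>a b::real. f (a *\<^sub>R x + b *\<^sub>R y) = a *\<^sub>R f x + b *\<^sub>R f y) \<and>
      (\<forall>x\<in>L. \<forall>y\<in>L. f (mcomm x y) = mcomm (f x) (f y)))"

end

theory Submission
  imports Defs
begin

(* Let \<Omega> be skew-Hermitian and A \<noteq> 0 with [\<Omega>, A] = i\<phi> A, \<phi> \<noteq> 0, spanning a one-dimensional
   eigenspace of ad \<Omega>. As ad \<Omega> is a derivation and A\<dagger> has eigenvalue -i\<phi>, K = [A, A\<dagger>] commutes
   with \<Omega> and [K, A] lies in the eigenspace of A, so A is a ladder operator for K: [K, A] = \<mu> A.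
   The identity tr([X, A] A\<dagger>) = tr(X K) gives i\<phi> |A|^2 = tr(\<Omega> K), hence K \<noteq> 0, and
   \<mu> |A|^2 = |K|^2 (Frobenius norms), hence \<mu> > 0. Then U = A - A\<dagger>, V = i(A + A\<dagger>), W = iK satisfy
   [U, V] = 2W, [V, W] = \<mu> U, [W, U] = \<mu> V, the relations of a rescaled basis of su(2); so their
   real span is closed under commutators, three-dimensional, and isomorphic to su(2). *)

lemma matrix_add_rdistrib: "((A::'a::semiring_1^'n^'m) + B) ** C = A ** C + B ** C"
  by (simp add: vec_eq_iff matrix_matrix_mult_def distrib_right sum.distrib)

lemma matrix_diff_ldistrib: "(A::'a::ring_1^'n^'m) ** (B - C) = A ** B - A ** C"
  by (simp add: vec_eq_iff matrix_matrix_mult_def right_diff_distrib sum_subtractf)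

lemma matrix_diff_rdistrib: "((A::'a::ring_1^'n^'m) - B) ** C = A ** C - B ** C"
  by (simp add: vec_eq_iff matrix_matrix_mult_def left_diff_distrib sum_subtractf)

lemma matrix_neg_left: "(- (A::'a::ring_1^'n^'m)) ** B = - (A ** B)"
  by (simp add: vec_eq_iff matrix_matrix_mult_def sum_negf)

lemma matrix_neg_right: "(A::'a::ring_1^'n^'m) ** (- B) = - (A ** B)"
  by (simp add: vec_eq_iff matrix_matrix_mult_def sum_negf)

lemma matrix_cscale_left: "cscale c A ** B = cscale c (A ** B)"
  by (simp add: vec_eq_iff matrix_matrix_mult_def cscale_def sum_distrib_left mult.assoc)

lemma matrix_cscale_right: "A ** cscale c B = cscale c (A ** B)"
  by (simp add: vec_eq_iff matrix_matrix_mult_def cscale_def sum_distrib_left mult_ac)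

lemma vector_space_cscale: "vector_space (cscale :: complex \<Rightarrow> complex^'n^'m \<Rightarrow> _)"
  by unfold_locales (simp_all add: vec_eq_iff cscale_def algebra_simps)

lemma cscale_of_real: "cscale (of_real r) (A::complex^'n^'m) = r *\<^sub>R A"
  by (simp add: vec_eq_iff cscale_def scaleR_conv_of_real[where 'a=complex])

lemma cscale_add_left: "cscale (c + d) A = cscale c A + cscale d A"
  by (simp add: vec_eq_iff cscale_def distrib_right)

lemma cscale_eq_0_iff: "cscale c A = 0 \<longleftrightarrow> c = 0 \<or> A = 0"
  by (auto simp: vec_eq_iff cscale_def)

lemma trace_cscale: "trace (cscale c A) = c * trace A"
  by (simp add: trace_def cscale_def sum_distrib_left)

lemma adj_adj [simp]: "adj (adj A) = A"
  by (simp add: adj_def vec_eq_iff)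

lemma adj_diff: "adj (A - B) = adj A - adj B"
  by (simp add: adj_def vec_eq_iff)

lemma adj_scaleR: "adj (r *\<^sub>R A) = r *\<^sub>R adj A"
  by (simp add: adj_def vec_eq_iff)

lemma adj_cscale: "adj (cscale c A) = cscale (cnj c) (adj A)"
  by (simp add: adj_def vec_eq_iff cscale_def)

lemma adj_matrix_mult: "adj (A ** B) = adj B ** adj A"
  by (simp add: adj_def vec_eq_iff matrix_matrix_mult_def mult.commute)

lemma mcomm_add_left: "mcomm (A + B) C = mcomm A C + mcomm B C"
  by (simp add: mcomm_def matrix_add_rdistrib matrix_add_ldistrib)

lemma mcomm_add_right: "mcomm C (A + B) = mcomm C A + mcomm C B"
  by (simp add: mcomm_def matrix_add_rdistrib matrix_add_ldistrib)

lemma mcomm_diff_left: "mcomm (A - B) C = mcomm A C - mcomm B C"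
  by (simp add: mcomm_def matrix_diff_rdistrib matrix_diff_ldistrib)

lemma mcomm_diff_right: "mcomm C (A - B) = mcomm C A - mcomm C B"
  by (simp add: mcomm_def matrix_diff_rdistrib matrix_diff_ldistrib)

lemma mcomm_scaleR_left: "mcomm (r *\<^sub>R A) B = r *\<^sub>R mcomm A B"
  by (simp add: mcomm_def scalar_matrix_assoc[symmetric] matrix_scalar_ac scaleR_diff_right)

lemma mcomm_scaleR_right: "mcomm A (r *\<^sub>R B) = r *\<^sub>R mcomm A B"
  by (simp add: mcomm_def scalar_matrix_assoc[symmetric] matrix_scalar_ac scaleR_diff_right)

lemma mcomm_cscale_left: "mcomm (cscale c A) B = cscale c (mcomm A B)"
  unfolding mcomm_def matrix_cscale_left matrix_cscale_right
  by (simp add: vec_eq_iff cscale_def right_diff_distrib)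

lemma mcomm_cscale_right: "mcomm A (cscale c B) = cscale c (mcomm A B)"
  unfolding mcomm_def matrix_cscale_left matrix_cscale_right
  by (simp add: vec_eq_iff cscale_def right_diff_distrib)

lemma mcomm_self [simp]: "mcomm A A = 0"
  by (simp add: mcomm_def)

lemma mcomm_anticomm: "mcomm B A = - mcomm A B"
  by (simp add: mcomm_def)

lemma mcomm_jacobi: "mcomm A (mcomm B C) = mcomm (mcomm A B) C + mcomm B (mcomm A C)"
  by (simp add: mcomm_def matrix_diff_rdistrib matrix_diff_ldistrib matrix_mul_assoc)

lemma adj_mcomm: "adj (mcomm A B) = mcomm (adj B) (adj A)"
  by (simp add: mcomm_def adj_diff adj_matrix_mult)

lemma trace_mcomm_mult: "trace (mcomm X A ** B) = trace (X ** mcomm A B)"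
proof -
  have "trace (A ** X ** B) = trace (X ** (B ** A))"
    using trace_mul_sym[of A "X ** B"] by (simp add: matrix_mul_assoc)
  then show ?thesis
    by (simp add: mcomm_def matrix_diff_rdistrib matrix_diff_ldistrib trace_sub matrix_mul_assoc)
qed

definition frob_norm_sq :: "complex^'n^'m \<Rightarrow> real" where
  "frob_norm_sq X = (\<Sum>i\<in>UNIV. \<Sum>j\<in>UNIV. (cmod (X $ i $ j))\<^sup>2)"

lemma trace_mult_adj: "trace (X ** adj X) = of_real (frob_norm_sq X)"
  by (simp add: trace_def matrix_matrix_mult_def adj_def frob_norm_sq_def of_real_sum)
    (simp flip: complex_norm_square)

lemma frob_norm_sq_pos:
  assumes "X \<noteq> 0"
  shows "frob_norm_sq X > 0"
proof -
  obtain i j where ij: "X $ i $ j \<noteq> 0"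
    using assms by (auto simp: vec_eq_iff)
  have "0 < (\<Sum>j'\<in>UNIV. (cmod (X $ i $ j'))\<^sup>2)"
    using sum_pos2[of UNIV j "\<lambda>j'. (cmod (X $ i $ j'))\<^sup>2"] ij by auto
  then show ?thesis
    unfolding frob_norm_sq_def by (rule sum_pos2[OF finite UNIV_I]) (simp add: sum_nonneg)
qed

lemma mem_Eig_iff: "X \<in> Eig \<phi> \<Omega> \<longleftrightarrow> mcomm \<Omega> X = cscale (\<i> * of_real \<phi>) X"
  by (simp add: Eig_def mcomm_def)

lemma mcomm_mem_Eig:
  assumes "X \<in> Eig \<phi> \<Omega>" "Y \<in> Eig \<psi> \<Omega>"
  shows "mcomm X Y \<in> Eig (\<phi> + \<psi>) \<Omega>"
proof -
  have "mcomm \<Omega> (mcomm X Y) = cscale (\<i> * of_real \<phi>) (mcomm X Y) + cscale (\<i> * of_real \<psi>) (mcomm X Y)"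
    using assms by (simp add: mem_Eig_iff mcomm_jacobi mcomm_cscale_left mcomm_cscale_right)
  then show ?thesis
    by (simp add: mem_Eig_iff cscale_add_left[symmetric] distrib_left)
qed

lemma adj_mem_Eig:
  assumes "\<Omega> \<in> u_alg" "X \<in> Eig \<phi> \<Omega>"
  shows "adj X \<in> Eig (- \<phi>) \<Omega>"
proof -
  have "adj (mcomm \<Omega> X) = mcomm (adj X) (- \<Omega>)"
    using assms(1) by (simp add: u_alg_def adj_mcomm)
  also have "\<dots> = mcomm \<Omega> (adj X)"
    by (simp add: mcomm_def matrix_neg_left matrix_neg_right)
  finally show ?thesis
    using assms(2) by (simp add: mem_Eig_iff adj_cscale)
qed

lemma mcomm_adj_neq_0_if_mem_Eig:
  assumes "A \<in> Eig \<phi> \<Omega>" "\<phi> \<noteq> 0" "A \<noteq> 0"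
  shows "mcomm A (adj A) \<noteq> 0"
proof
  assume "mcomm A (adj A) = 0"
  then have "trace (mcomm \<Omega> A ** adj A) = 0"
    by (simp add: trace_mcomm_mult) (simp add: trace_def)
  then have "(\<i> * of_real \<phi>) * of_real (frob_norm_sq A) = 0"
    using assms(1) by (simp add: mem_Eig_iff matrix_cscale_left trace_cscale trace_mult_adj)
  with assms(2) frob_norm_sq_pos[OF assms(3)] show False
    by simp
qed

lemma ladder_coefficient_eq_frob_ratio:
  assumes "mcomm (mcomm A (adj A)) A = cscale \<mu> A" "A \<noteq> 0"
  shows "\<mu> = of_real (frob_norm_sq (mcomm A (adj A)) / frob_norm_sq A)"
proof -
  define K where "K = mcomm A (adj A)"
  have "adj K = K"
    by (simp add: K_def adj_mcomm)
  then have "trace (mcomm K A ** adj A) = of_real (frob_norm_sq K)"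
    by (metis K_def trace_mcomm_mult trace_mult_adj)
  then have "\<mu> * of_real (frob_norm_sq A) = of_real (frob_norm_sq K)"
    using assms(1) by (simp add: K_def matrix_cscale_left trace_cscale trace_mult_adj)
  with frob_norm_sq_pos[OF assms(2)] show ?thesis
    by (simp add: K_def field_simps)
qed

lemma cdim_zero: "cdim {0 :: complex^'n^'m} = 0"
proof -
  interpret cs: vector_space "cscale :: complex \<Rightarrow> complex^'n^'m \<Rightarrow> _"
    by (rule vector_space_cscale)
  show ?thesis
    unfolding cdim_def using cs.dim_eq_card[of "{}" "{0}"]
    by (simp add: cs.span_insert_0 cs.independent_empty)
qed

lemma cdim_eq_1_imp_cscale:
  assumes "cdim (E :: (complex^'n^'m) set) = 1" "A \<in> E" "A \<noteq> 0" "M \<in> E"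
  obtains \<mu> where "M = cscale \<mu> A"
proof -
  interpret cs: vector_space "cscale :: complex \<Rightarrow> complex^'n^'m \<Rightarrow> _"
    by (rule vector_space_cscale)
  obtain B where B: "B \<subseteq> E" "cs.independent B" "E \<subseteq> cs.span B" "card B = cs.dim E"
    by (rule cs.basis_exists)
  then obtain b where b: "B = {b}"
    using assms(1) unfolding cdim_def by (auto simp: card_1_singleton_iff)
  then have "A \<in> range (\<lambda>c. cscale c b)" "M \<in> range (\<lambda>c. cscale c b)"
    using B(3) assms(2,4) unfolding b cs.span_singleton by auto
  then obtain c d where cd: "A = cscale c b" "M = cscale d b"
    by auto
  then have "M = cscale (d / c) A"
    using assms(3) by (simp add: vec_eq_iff cscale_def)
  then show thesis ..
qed

lemma Eig_zero: "\<phi> \<noteq> 0 \<Longrightarrow> Eig \<phi> 0 = {0}"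
  by (auto simp: Eig_def cscale_eq_0_iff)

lemma sep_index_eq_1_E:
  fixes A :: "complex^'n^'n"
  assumes "sep_index A = 1"
  obtains \<phi> \<Omega> where "A \<noteq> 0" "A \<in> Eig \<phi> \<Omega>" "\<Omega> \<in> u_alg" "\<phi> \<noteq> 0" "cdim (Eig \<phi> \<Omega>) = 1"
proof -
  define S where "S = {cdim (Eig \<phi> \<Omega>) | \<phi> \<Omega>. A \<in> Eig \<phi> \<Omega> \<and> \<Omega> \<in> u_alg \<and> \<phi> \<noteq> 0}"
  have "S \<noteq> {}" and Inf_S: "Inf S = 1"
    using assms by (auto simp: sep_index_def S_def Let_def split: if_splits)
  then have "1 \<in> S"
    using Inf_nat_def1[of S] by simp
  then obtain \<phi> \<Omega> where "A \<in> Eig \<phi> \<Omega>" "\<Omega> \<in> u_alg" "\<phi> \<noteq> 0" "cdim (Eig \<phi> \<Omega>) = 1"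
    unfolding S_def by auto
  moreover have "A \<noteq> 0"
  proof
    assume "A = 0"
    have "cdim (Eig 1 (0 :: complex^'n^'n)) \<in> S"
      unfolding S_def using \<open>A = 0\<close>
      by (intro CollectI exI[of _ "1::real"] exI[of _ "0::complex^'n^'n"])
        (simp add: u_alg_def Eig_def cscale_def adj_def vec_eq_iff)
    then have "0 \<in> S"
      by (simp add: Eig_zero cdim_zero)
    then have "Inf S \<le> 0"
      unfolding Inf_nat_def by (rule Least_le)
    with Inf_S show False
      by simp
  qed
  ultimately show thesis
    using that by blast
qed

lemma sep_index_eq_1_ladder:
  fixes A :: "complex^'n^'n"
  assumes "sep_index A = 1"
  obtains l where "l > 0" "A \<noteq> 0" "mcomm (mcomm A (adj A)) A = l *\<^sub>R A"
proof -
  obtain \<phi> \<Omega> where A0: "A \<noteq> 0" and AE: "A \<in> Eig \<phi> \<Omega>" and "\<Omega> \<in> u_alg" "\<phi> \<noteq> 0"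
    and dim1: "cdim (Eig \<phi> \<Omega>) = 1"
    using sep_index_eq_1_E[OF assms] .
  define K where "K = mcomm A (adj A)"
  have "K \<in> Eig 0 \<Omega>"
    using mcomm_mem_Eig[OF AE adj_mem_Eig[OF \<open>\<Omega> \<in> u_alg\<close> AE]] by (simp add: K_def)
  then have "mcomm K A \<in> Eig \<phi> \<Omega>"
    using mcomm_mem_Eig[OF _ AE] by fastforce
  then obtain \<mu> where \<mu>: "mcomm K A = cscale \<mu> A"
    using cdim_eq_1_imp_cscale[OF dim1 AE A0] by blast
  define l where "l = frob_norm_sq K / frob_norm_sq A"
  have "K \<noteq> 0"
    unfolding K_def by (rule mcomm_adj_neq_0_if_mem_Eig[OF AE \<open>\<phi> \<noteq> 0\<close> A0])
  have "l > 0"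
    unfolding l_def using frob_norm_sq_pos[OF \<open>K \<noteq> 0\<close>] frob_norm_sq_pos[OF A0] by simp
  moreover have "mcomm K A = l *\<^sub>R A"
    using ladder_coefficient_eq_frob_ratio[OF \<mu>[unfolded K_def] A0] \<mu>
    by (simp add: K_def l_def cscale_of_real del: of_real_divide)
  ultimately show thesis
    using that A0 by (simp add: K_def)
qed

definition su2_relations :: "real \<Rightarrow> complex^'n^'n \<Rightarrow> complex^'n^'n \<Rightarrow> complex^'n^'n \<Rightarrow> bool" where
  "su2_relations l U V W \<longleftrightarrow> mcomm U V = 2 *\<^sub>R W \<and> mcomm V W = l *\<^sub>R U \<and> mcomm W U = l *\<^sub>R V"

lemma su2_relations_ladder:
  fixes A :: "complex^'n^'n"
  assumes KA: "mcomm (mcomm A (adj A)) A = l *\<^sub>R A"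
  shows "su2_relations l (A - adj A) (cscale \<i> A + cscale \<i> (adj A)) (cscale \<i> (mcomm A (adj A)))"
proof -
  define K where "K = mcomm A (adj A)"
  have AK: "mcomm A K = - (l *\<^sub>R A)"
    using KA mcomm_anticomm[of A K] by (simp add: K_def)
  have "adj (mcomm K A) = mcomm (adj A) K"
    by (simp add: K_def adj_mcomm)
  then have AdK: "mcomm (adj A) K = l *\<^sub>R adj A"
    using KA by (simp add: K_def adj_scaleR)
  then have KAd: "mcomm K (adj A) = - (l *\<^sub>R adj A)"
    using mcomm_anticomm[of K "adj A"] by simp
  have AdA: "mcomm (adj A) A = - K"
    using mcomm_anticomm[of "adj A" A] by (simp add: K_def)
  show ?thesis
    unfolding su2_relations_def K_def[symmetric]
    by (simp add: mcomm_add_left mcomm_add_right mcomm_diff_left mcomm_diff_right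
        mcomm_cscale_left mcomm_cscale_right AK AdK KAd AdA KA[folded K_def] K_def[symmetric])
      (simp add: vec_eq_iff cscale_def algebra_simps scaleR_conv_of_real[where 'a=complex])
qed

lemma su2_relationsD:
  assumes "su2_relations l U V W"
  shows "mcomm U V = 2 *\<^sub>R W" "mcomm V W = l *\<^sub>R U" "mcomm W U = l *\<^sub>R V"
    and "mcomm V U = - (2 *\<^sub>R W)" "mcomm W V = - (l *\<^sub>R U)" "mcomm U W = - (l *\<^sub>R V)"
proof -
  show rel: "mcomm U V = 2 *\<^sub>R W" "mcomm V W = l *\<^sub>R U" "mcomm W U = l *\<^sub>R V"
    using assms by (simp_all add: su2_relations_def)
  then show "mcomm V U = - (2 *\<^sub>R W)" "mcomm W V = - (l *\<^sub>R U)" "mcomm U W = - (l *\<^sub>R V)"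
    by (metis mcomm_anticomm)+
qed

definition lincomb3 :: "'a::real_vector \<Rightarrow> 'a \<Rightarrow> 'a \<Rightarrow> real \<times> real \<times> real \<Rightarrow> 'a" where
  "lincomb3 U V W = (\<lambda>(a, b, c). a *\<^sub>R U + b *\<^sub>R V + c *\<^sub>R W)"

definition su2_bracket :: "real \<Rightarrow> real \<times> real \<times> real \<Rightarrow> real \<times> real \<times> real \<Rightarrow> real \<times> real \<times> real" where
  "su2_bracket l = (\<lambda>(a1, b1, c1) (a2, b2, c2).
     (l * (b1 * c2 - c1 * b2), l * (c1 * a2 - a1 * c2), 2 * (a1 * b2 - b1 * a2)))"

lemma lincomb3_linear:
  "\<alpha> *\<^sub>R lincomb3 U V W (a1, b1, c1) + \<beta> *\<^sub>R lincomb3 U V W (a2, b2, c2)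
     = lincomb3 U V W (\<alpha> * a1 + \<beta> * a2, \<alpha> * b1 + \<beta> * b2, \<alpha> * c1 + \<beta> * c2)"
  by (simp add: lincomb3_def algebra_simps)

lemma mcomm_lincomb3:
  assumes "su2_relations l U V W"
  shows "mcomm (lincomb3 U V W p) (lincomb3 U V W q) = lincomb3 U V W (su2_bracket l p q)"
  by (cases p, cases q) (simp add: lincomb3_def su2_bracket_def su2_relationsD[OF assms]
      mcomm_add_left mcomm_add_right mcomm_scaleR_left mcomm_scaleR_right algebra_simps)

lemma lincomb3_eq_0D:
  assumes "su2_relations l U V W" "U \<noteq> 0" "l > 0" "lincomb3 U V W (a, b, c) = 0"
  shows "a = 0 \<and> b = 0 \<and> c = 0"
proof -
  note rel = su2_relationsD[OF assms(1)]
  have T: "a *\<^sub>R U + b *\<^sub>R V + c *\<^sub>R W = 0"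
    using assms(4) by (simp add: lincomb3_def)
  have "mcomm U (a *\<^sub>R U + b *\<^sub>R V + c *\<^sub>R W) = 0"
    using T by (simp add: mcomm_def)
  then have E: "(2 * b) *\<^sub>R W - (c * l) *\<^sub>R V = 0"
    by (simp add: mcomm_add_right mcomm_scaleR_right rel algebra_simps)
  have "mcomm V ((2 * b) *\<^sub>R W - (c * l) *\<^sub>R V) = 0"
    using E by (simp add: mcomm_def)
  then have "(2 * b * l) *\<^sub>R U = 0"
    by (simp add: mcomm_diff_right mcomm_scaleR_right rel algebra_simps)
  then have b: "b = 0"
    using assms(2,3) by simp
  have "mcomm W ((2 * b) *\<^sub>R W - (c * l) *\<^sub>R V) = 0"
    using E by (simp add: mcomm_def)
  then have "(c * l * l) *\<^sub>R U = 0"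
    by (simp add: mcomm_diff_right mcomm_scaleR_right rel algebra_simps)
  then have c: "c = 0"
    using assms(2,3) by simp
  have "a = 0"
    using T b c assms(2) by simp
  with b c show ?thesis
    by simp
qed

lemma inj_lincomb3:
  assumes "su2_relations l U V W" "U \<noteq> 0" "l > 0"
  shows "inj (lincomb3 U V W)"
proof (rule injI)
  fix p q
  assume eq: "lincomb3 U V W p = lincomb3 U V W q"
  obtain a1 b1 c1 a2 b2 c2 where pq: "p = (a1, b1, c1)" "q = (a2, b2, c2)"
    by (cases p, cases q) auto
  have "lincomb3 U V W (a1 - a2, b1 - b2, c1 - c2) = 0"
    using eq lincomb3_linear[of 1 U V W a1 b1 c1 "-1" a2 b2 c2] by (simp add: pq)
  from lincomb3_eq_0D[OF assms this] show "p = q"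
    by (simp add: pq)
qed

lemma lie_iso_range_lincomb3:
  fixes U V W :: "complex^'n^'n" and P Q R :: "complex^'k^'k"
  assumes UVW: "su2_relations l U V W" and PQR: "su2_relations l P Q R"
    and "U \<noteq> 0" "P \<noteq> 0" "l > 0"
  shows "lie_iso (range (lincomb3 U V W)) (range (lincomb3 P Q R))"
proof -
  let ?g = "lincomb3 U V W" and ?h = "lincomb3 P Q R"
  have "inj ?g" "inj ?h"
    using inj_lincomb3 assms by blast+
  define f where "f = ?h \<circ> inv ?g"
  have f: "f (?g p) = ?h p" for p
    unfolding f_def using \<open>inj ?g\<close> by simp
  have "bij_betw f (range ?g) (range ?h)"
  proof (rule bij_betw_imageI)
    show "inj_on f (range ?g)"
      using \<open>inj ?h\<close> by (auto intro!: inj_onI simp: f dest: injD)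
    show "f ` range ?g = range ?h"
      by (simp add: image_image f)
  qed
  moreover have "f (a *\<^sub>R x + b *\<^sub>R y) = a *\<^sub>R f x + b *\<^sub>R f y"
    if "x \<in> range ?g" "y \<in> range ?g" for x y a b
    using that by (auto simp: lincomb3_linear f)
  moreover have "f (mcomm x y) = mcomm (f x) (f y)" if "x \<in> range ?g" "y \<in> range ?g" for x y
    using that by (auto simp: mcomm_lincomb3[OF UVW] mcomm_lincomb3[OF PQR] f)
  ultimately show ?thesis
    unfolding lie_iso_def by blast
qed

lemma subspace_range_lincomb3: "subspace (range (lincomb3 U V W))"
  unfolding subspace_def
proof (intro conjI ballI allI)
  show "0 \<in> range (lincomb3 U V W)"
    by (rule range_eqI[of _ _ "(0, 0, 0)"]) (simp add: lincomb3_def)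
next
  fix x y
  assume "x \<in> range (lincomb3 U V W)" "y \<in> range (lincomb3 U V W)"
  then show "x + y \<in> range (lincomb3 U V W)"
    using lincomb3_linear[of 1 U V W _ _ _ 1] by auto
next
  fix c :: real and x
  assume "x \<in> range (lincomb3 U V W)"
  then show "c *\<^sub>R x \<in> range (lincomb3 U V W)"
    using lincomb3_linear[of c U V W _ _ _ 0 0 0 0] by auto
qed

lemma lie_generated_eq_range_lincomb3:
  assumes "su2_relations l U V W"
  shows "lie_generated {U, V, W} = range (lincomb3 U V W)"
proof
  have "{U, V, W} \<subseteq> range (lincomb3 U V W)"
    using range_eqI[of _ "lincomb3 U V W" "(1, 0, 0)"] range_eqI[of _ "lincomb3 U V W" "(0, 1, 0)"]
      range_eqI[of _ "lincomb3 U V W" "(0, 0, 1)"]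
    by (simp add: lincomb3_def)
  moreover have "\<forall>x\<in>range (lincomb3 U V W). \<forall>y\<in>range (lincomb3 U V W). mcomm x y \<in> range (lincomb3 U V W)"
    using mcomm_lincomb3[OF assms] by auto
  ultimately show "lie_generated {U, V, W} \<subseteq> range (lincomb3 U V W)"
    unfolding lie_generated_def using subspace_range_lincomb3 by (intro Inter_lower) auto
next
  show "range (lincomb3 U V W) \<subseteq> lie_generated {U, V, W}"
    unfolding lie_generated_def
    by (auto simp: lincomb3_def intro!: subspace_add subspace_scale)
qed

text \<open>\<open>-\<i>/2\<close> times the Pauli matrices.\<close>

definition su2_e1 :: "complex^2^2" where
  "su2_e1 = (\<chi> i j. if i = j then 0 else - \<i> / 2)"

definition su2_e2 :: "complex^2^2" where
  "su2_e2 = (\<chi> i j. if i = j then 0 else if i = 1 then - 1 / 2 else 1 / 2)"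

definition su2_e3 :: "complex^2^2" where
  "su2_e3 = (\<chi> i j. if i \<noteq> j then 0 else if i = 1 then - \<i> / 2 else \<i> / 2)"

lemma su2_relations_basis:
  assumes "l > 0"
  shows "su2_relations l (sqrt (2 * l) *\<^sub>R su2_e1) (sqrt (2 * l) *\<^sub>R su2_e2) (l *\<^sub>R su2_e3)"
proof -
  have "mcomm su2_e1 su2_e2 = su2_e3" "mcomm su2_e2 su2_e3 = su2_e1" "mcomm su2_e3 su2_e1 = su2_e2"
    by (simp_all add: mcomm_def su2_e1_def su2_e2_def su2_e3_def vec_eq_iff forall_2
        matrix_matrix_mult_def sum_2 field_simps)
  moreover have "sqrt (2 * l) * sqrt (2 * l) = 2 * l"
    using assms by simp
  ultimately show ?thesis
    unfolding su2_relations_def using assms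
    by (simp add: mcomm_scaleR_left mcomm_scaleR_right mult_ac)
qed

lemma su2_eq_range_lincomb3:
  assumes "l > 0"
  shows "su2 = range (lincomb3 (sqrt (2 * l) *\<^sub>R su2_e1) (sqrt (2 * l) *\<^sub>R su2_e2) (l *\<^sub>R su2_e3))"
    (is "_ = range ?g")
proof
  show "su2 \<subseteq> range ?g"
  proof
    fix X
    assume "X \<in> su2"
    then have skew: "adj X = - X" and traceless: "trace X = 0"
      by (auto simp: su2_def)
    have "adj X $ 1 $ 1 = (- X) $ 1 $ 1" "adj X $ 1 $ 2 = (- X) $ 1 $ 2"
      using skew by simp_all
    then have "Re (X $ 1 $ 1) = 0" "X $ 2 $ 1 = - cnj (X $ 1 $ 2)"
      by (simp_all add: adj_def complex_eq_iff)
    moreover have "X $ 2 $ 2 = - X $ 1 $ 1"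
      using traceless by (simp add: trace_def sum_2 eq_neg_iff_add_eq_0 add.commute)
    ultimately have "X = ?g (- 2 * Im (X $ 1 $ 2) / sqrt (2 * l), - 2 * Re (X $ 1 $ 2) / sqrt (2 * l),
        - 2 * Im (X $ 1 $ 1) / l)"
      using assms by (simp add: lincomb3_def su2_e1_def su2_e2_def su2_e3_def vec_eq_iff forall_2
          complex_eq_iff)
    then show "X \<in> range ?g"
      by blast
  qed
  show "range ?g \<subseteq> su2"
    by (auto simp: su2_def lincomb3_def su2_e1_def su2_e2_def su2_e3_def vec_eq_iff forall_2 adj_def
        trace_def sum_2 complex_eq_iff)
qed

lemma lie_iso_lie_generated_su2:
  assumes "su2_relations l U V W" "U \<noteq> 0" "l > 0"
  shows "lie_iso (lie_generated {U, V, W}) su2"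
proof -
  have "sqrt (2 * l) *\<^sub>R su2_e1 \<noteq> 0"
    using assms(3) by (simp add: su2_e1_def vec_eq_iff forall_2)
  then show ?thesis
    using lie_iso_range_lincomb3[OF assms(1) su2_relations_basis assms(2) _ assms(3)] assms(3)
    by (simp add: lie_generated_eq_range_lincomb3[OF assms(1)] su2_eq_range_lincomb3)
qed

theorem proposition2p26:
  fixes A :: "complex^'n^'n"
  assumes "sep_index A = 1"
  shows "lie_iso (lie_generated {A - adj A, cscale \<i> A + cscale \<i> (adj A), cscale \<i> (mcomm A (adj A))}) su2"
proof -
  obtain l where "l > 0" "A \<noteq> 0" and ladder: "mcomm (mcomm A (adj A)) A = l *\<^sub>R A"
    using sep_index_eq_1_ladder[OF assms] .
  have "A - adj A \<noteq> 0"
  proof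
    assume "A - adj A = 0"
    then have "l *\<^sub>R A = 0"
      using ladder by (simp add: mcomm_def)
    with \<open>l > 0\<close> \<open>A \<noteq> 0\<close> show False
      by simp
  qed
  then show ?thesis
    using lie_iso_lie_generated_su2[OF su2_relations_ladder[OF ladder]] \<open>l > 0\<close> by blast
qed

end
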